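(* For $n\geq0$ let $T_n$ be the total number of lattice points lying on the $x$-axis, summed over all symmetric Dyck paths of length $2n$, and let $d_n$ be the number of such paths. Let $C(x)=\frac{1-\sqrt{1-4x}}{2x}$, $B(x)=\frac{1}{\sqrt{1-4x}}$, and $C_m=\frac{1}{m+1}\binom{2m}{m}$. Then $$\sum_{n\geq0}T_nx^n=2\,C(x^2)\cdot\frac{1}{2x}\left(\sqrt{\frac{1+2x}{1-2x}}-1\right)-C(x^2)=1+2x+5x^2+8x^3+18x^4+30x^5+65x^6+112x^7+\cdots.$$ Moreover: $\sum_{m\geq0}T_{2m}x^{2m}=C(x^2)\left[2B(x^2)-1\right]$ and the average number of points on the $x$-axis for $n=2m$ is $\frac{T_{2m}}{d_{2m}}=\frac{\binom{2m+2}{m+1}-C_m}{\binom{2m}{m}}=\frac{4m+1}{m+1}\to4$; and $\sum_{m\geq0}T_{2m+1}x^{2m+1}=2xB(x^2)C(x^2)^2$ and for $n=2m+1$ the average is $\frac{T_{2m+1}}{d_{2m+1}}=\frac{2\binom{2m+2}{m}}{\binom{2m+1}{m}}=\frac{4(m+1)}{m+2}\to4$ as $m\to\infty$.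
   Context: A Dyck path of length $2n$ is a lattice path from $(0,0)$ to $(2n,0)$ with steps $U=(1,1)$, $D=(1,-1)$ never going below the $x$-axis. It is symmetric if it is invariant under reflection in the line $x=n$ (its $i$-th step is $U$ iff its $(2n+1-i)$-th step is $D$). The points on the $x$-axis of a path are its vertices with $y$-coordinate $0$, including both endpoints. *)

theory Defs
  imports Complex_Main
begin

text \<open>A lattice path is a list of steps; True = U = (1,1), False = D = (1,-1).\<close>

definition step_val :: "bool \<Rightarrow> int" where
  "step_val b = (if b then 1 else -1)"

definition height :: "bool list \<Rightarrow> nat \<Rightarrow> int" where
  "height p k = (\<Sum>i<k. step_val (p ! i))"

definition dyck_path :: "nat \<Rightarrow> bool list \<Rightarrow> bool" where
  "dyck_path n p \<longleftrightarrow> length p = 2 * n \<and> (\<forall>k\<le>2 * n. height p k \<ge> 0) \<and> height p (2 * n) = 0"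

text \<open>Symmetric: the i-th step (1-based) is U iff the (2n+1-i)-th step is D.\<close>
definition symmetric_path :: "nat \<Rightarrow> bool list \<Rightarrow> bool" where
  "symmetric_path n p \<longleftrightarrow> (\<forall>i<2 * n. p ! i \<longleftrightarrow> \<not> p ! (2 * n - 1 - i))"

definition sym_dyck_paths :: "nat \<Rightarrow> bool list set" where
  "sym_dyck_paths n = {p. dyck_path n p \<and> symmetric_path n p}"

definition axis_points :: "nat \<Rightarrow> bool list \<Rightarrow> nat" where
  "axis_points n p = card {k. k \<le> 2 * n \<and> height p k = 0}"

definition d_seq :: "nat \<Rightarrow> nat" where
  "d_seq n = card (sym_dyck_paths n)"

definition T_seq :: "nat \<Rightarrow> nat" where
  "T_seq n = (\<Sum>p\<in>sym_dyck_paths n. axis_points n p)"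

definition Cgf :: "real \<Rightarrow> real" where
  "Cgf x = (1 - sqrt (1 - 4 * x)) / (2 * x)"

definition Bgf :: "real \<Rightarrow> real" where
  "Bgf x = 1 / sqrt (1 - 4 * x)"

definition catalan :: "nat \<Rightarrow> real" where
  "catalan m = 1 / (real m + 1) * real ((2 * m) choose m)"

end

theory Submission
  imports Defs "HOL-Analysis.Analysis" "HOL-Real_Asymp.Real_Asymp"
begin

text \<open>
  A symmetric Dyck path of length \<open>2n\<close> is its first half followed by the mirrored first half,
  and the first half is an arbitrary path of length \<open>n\<close> that never goes below the axis. So
  \<open>d(n)\<close> counts these nonnegative paths, and \<open>T(n) = 2 Z(n) - b(n)\<close>, where \<open>Z(n)\<close> is the
  total number of zeros of the nonnegative paths of length \<open>n\<close> and \<open>b(n)\<close> the number of them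
  ending on the axis (whose endpoint becomes the midpoint, counted twice). Appending one step to a
  path gives recursions showing \<open>Z(n) = d(n + 1) - b(n + 1)\<close>; together with the ballot numbers
  \<open>b(2m) = C\<^sub>m\<close>, \<open>b(2m + 1) = 0\<close> this yields \<open>T(2m) = binom (2m + 2) (m + 1) - C\<^sub>m\<close> and
  \<open>T(2m + 1) = 2 binom (2m + 2) m\<close>. The generating functions follow from the binomial series
  \<open>B(x) = \<Sum> binom (2n) n x\<^sup>n\<close> and \<open>C(x) = \<Sum> C\<^sub>n x\<^sup>n\<close>.
\<close>

section \<open>Paths staying weakly above the axis\<close>

lemma height_0 [simp]: "height p 0 = 0"
  by (simp add: height_def)

lemma height_Suc: "height p (Suc k) = height p k + step_val (p ! k)"
  by (simp add: height_def)

lemma height_append: "k \<le> length q \<Longrightarrow> height (q @ r) k = height q k"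
  unfolding height_def by (intro sum.cong) (auto simp: nth_append)

lemma height_snoc: "length q = n \<Longrightarrow> height (q @ [b]) (Suc n) = height q n + step_val b"
  by (simp add: height_Suc height_append nth_append)

definition nonneg_path :: "bool list \<Rightarrow> bool" where
  "nonneg_path q \<longleftrightarrow> (\<forall>k\<le>length q. height q k \<ge> 0)"

definition nonneg_paths :: "nat \<Rightarrow> bool list set" where
  "nonneg_paths n = {q. length q = n \<and> nonneg_path q}"

definition nonneg_paths_to :: "nat \<Rightarrow> int \<Rightarrow> bool list set" where
  "nonneg_paths_to n h = {q \<in> nonneg_paths n. height q n = h}"

definition axis_zeros :: "bool list \<Rightarrow> nat" where
  "axis_zeros q = card {k. k \<le> length q \<and> height q k = 0}"

lemma finite_nonneg_paths [simp]: "finite (nonneg_paths n)"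
proof (rule finite_subset)
  show "nonneg_paths n \<subseteq> {xs. set xs \<subseteq> UNIV \<and> length xs = n}"
    unfolding nonneg_paths_def by auto
  show "finite {xs. set xs \<subseteq> (UNIV :: bool set) \<and> length xs = n}"
    by (rule finite_lists_length_eq) simp
qed

lemma finite_nonneg_paths_to [simp]: "finite (nonneg_paths_to n h)"
  unfolding nonneg_paths_to_def by simp

lemma nonneg_paths_to_subset: "nonneg_paths_to n h \<subseteq> nonneg_paths n"
  by (auto simp: nonneg_paths_to_def)

lemma nonneg_paths_0: "nonneg_paths 0 = {[]}"
  by (auto simp: nonneg_paths_def nonneg_path_def)

lemma nonneg_paths_to_0: "nonneg_paths_to 0 h = (if h = 0 then {[]} else {})"
  by (auto simp: nonneg_paths_to_def nonneg_paths_0)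

lemma nonneg_paths_to_neg: "h < 0 \<Longrightarrow> nonneg_paths_to n h = {}"
  unfolding nonneg_paths_to_def nonneg_paths_def nonneg_path_def by force

lemma nonneg_path_snoc:
  "nonneg_path (q @ [b]) \<longleftrightarrow> nonneg_path q \<and> height q (length q) + step_val b \<ge> 0"
proof -
  have "(\<forall>k\<le>Suc (length q). height (q @ [b]) k \<ge> 0) \<longleftrightarrow>
        (\<forall>k\<le>length q. height (q @ [b]) k \<ge> 0) \<and> height (q @ [b]) (Suc (length q)) \<ge> 0"
    by (auto simp: le_Suc_eq)
  then show ?thesis
    unfolding nonneg_path_def by (simp add: height_append height_snoc)
qed

lemma nonneg_paths_Suc:
  "nonneg_paths (Suc n) =
     (\<lambda>q. q @ [True]) ` nonneg_paths n \<union> (\<lambda>q. q @ [False]) ` (nonneg_paths n - nonneg_paths_to n 0)"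
proof (rule set_eqI)
  fix p
  show "p \<in> nonneg_paths (Suc n) \<longleftrightarrow>
    p \<in> (\<lambda>q. q @ [True]) ` nonneg_paths n \<union> (\<lambda>q. q @ [False]) ` (nonneg_paths n - nonneg_paths_to n 0)"
  proof (cases p rule: rev_cases)
    case Nil
    then show ?thesis by (auto simp: nonneg_paths_def)
  next
    case (snoc q b)
    have "0 \<le> height q (length q)" if "nonneg_path q"
      using that by (simp add: nonneg_path_def)
    then show ?thesis
      unfolding snoc by (cases b) (auto simp: nonneg_paths_def nonneg_paths_to_def nonneg_path_snoc step_val_def)
  qed
qed

lemma nonneg_paths_to_Suc:
  assumes "h \<ge> 0"
  shows "nonneg_paths_to (Suc n) h =
    (\<lambda>q. q @ [True]) ` nonneg_paths_to n (h - 1) \<union> (\<lambda>q. q @ [False]) ` nonneg_paths_to n (h + 1)"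
proof (rule set_eqI)
  fix p
  show "p \<in> nonneg_paths_to (Suc n) h \<longleftrightarrow>
    p \<in> (\<lambda>q. q @ [True]) ` nonneg_paths_to n (h - 1) \<union> (\<lambda>q. q @ [False]) ` nonneg_paths_to n (h + 1)"
  proof (cases p rule: rev_cases)
    case Nil
    then show ?thesis by (auto simp: nonneg_paths_to_def nonneg_paths_def)
  next
    case (snoc q b)
    then show ?thesis using assms
      by (cases b) (auto simp: nonneg_paths_to_def nonneg_paths_def nonneg_path_snoc height_snoc step_val_def)
  qed
qed

section \<open>Ballot numbers\<close>

fun ballot :: "nat \<Rightarrow> int \<Rightarrow> nat" where
  "ballot 0 h = (if h = 0 then 1 else 0)"
| "ballot (Suc n) h = (if h < 0 then 0 else ballot n (h - 1) + ballot n (h + 1))"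

lemma ballot_neg: "h < 0 \<Longrightarrow> ballot n h = 0"
  by (cases n) auto

lemma ballot_gt: "h > int n \<Longrightarrow> ballot n h = 0"
  by (induction n arbitrary: h) auto

lemma ballot_parity: "odd (int n + h) \<Longrightarrow> ballot n h = 0"
proof (induction n arbitrary: h)
  case (Suc n)
  have "odd (int n + (h - 1))" "odd (int n + (h + 1))"
    using Suc.prems by (simp_all add: algebra_simps)
  then show ?case
    using Suc.IH by simp
qed auto

lemma ballot_Suc_0: "ballot (Suc n) 0 = ballot n 1"
  by (simp add: ballot_neg)

lemma ballot_odd_0: "ballot (2 * m + 1) 0 = 0"
  by (rule ballot_parity) simp

lemma card_nonneg_paths_to: "card (nonneg_paths_to n h) = ballot n h"
proof (induction n arbitrary: h)
  case 0
  then show ?case by (simp add: nonneg_paths_to_0)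
next
  case (Suc n)
  show ?case
  proof (cases "h < 0")
    case True
    then show ?thesis by (simp add: nonneg_paths_to_neg)
  next
    case False
    then have "card (nonneg_paths_to (Suc n) h)
        = card ((\<lambda>q. q @ [True]) ` nonneg_paths_to n (h - 1))
          + card ((\<lambda>q. q @ [False]) ` nonneg_paths_to n (h + 1))"
      unfolding nonneg_paths_to_Suc[OF leI[OF False]] by (intro card_Un_disjoint) auto
    also have "\<dots> = ballot n (h - 1) + ballot n (h + 1)"
      by (simp add: card_image inj_on_def Suc.IH)
    finally show ?thesis
      using False by simp
  qed
qed

text \<open>By the reflection principle, \<open>ballot n (n - 2 d) = binom n d - binom n (d - 1)\<close>.\<close>

definition ballot_binom :: "nat \<Rightarrow> nat \<Rightarrow> int" where
  "ballot_binom n d = int (n choose d) - (if d = 0 then 0 else int (n choose (d - 1)))"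

lemma ballot_binom_Suc: "d \<ge> 1 \<Longrightarrow> ballot_binom (Suc n) d = ballot_binom n d + ballot_binom n (d - 1)"
  by (cases d; cases "d - 1") (auto simp: ballot_binom_def)

lemma ballot_binom_diagonal: "d \<ge> 1 \<Longrightarrow> ballot_binom (2 * d - 1) d = 0"
  using binomial_symmetric[of d "2 * d - 1"] by (simp add: ballot_binom_def)

lemma ballot_eq_ballot_binom:
  "2 * d \<le> n + 1 \<Longrightarrow> int (ballot n (int n - 2 * int d)) = ballot_binom n d"
proof (induction n arbitrary: d)
  case 0
  then show ?case by (simp add: ballot_binom_def le_Suc_eq)
next
  case (Suc n)
  show ?case
  proof (cases "2 * d = n + 2")
    case True
    then have "int (Suc n) - 2 * int d = -1" "d \<ge> 1" "Suc n = 2 * d - 1"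
      by auto
    then show ?thesis
      using ballot_binom_diagonal[of d] ballot_neg[of "-1" "Suc n"] by simp
  next
    case False
    then have d: "2 * d \<le> n + 1"
      using Suc.prems by simp
    then have rec: "ballot (Suc n) (int (Suc n) - 2 * int d)
        = ballot n (int n - 2 * int d) + ballot n (int n - 2 * int d + 2)"
      by (simp add: algebra_simps)
    show ?thesis
    proof (cases "d = 0")
      case True
      then show ?thesis
        using rec Suc.IH[of 0] ballot_gt[of n "int n + 2"] by (simp add: ballot_binom_def)
    next
      case False
      then have shift: "int n - 2 * int d + 2 = int n - 2 * int (d - 1)"
        by simp
      have "int (ballot n (int n - 2 * int (d - 1))) = ballot_binom n (d - 1)"
        using Suc.IH[of "d - 1"] d by simp
      then show ?thesis
        unfolding rec shift using Suc.IH[OF d] False ballot_binom_Suc[of d n] by simp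
    qed
  qed
qed

section \<open>Zeros on the axis\<close>

lemma axis_zeros_Nil: "axis_zeros [] = 1"
proof -
  have "{k. k \<le> length ([] :: bool list) \<and> height [] k = 0} = {0}"
    by auto
  then show ?thesis
    by (simp add: axis_zeros_def)
qed

lemma axis_zeros_snoc:
  assumes "length q = n"
  shows "axis_zeros (q @ [b]) = axis_zeros q + of_bool (height q n + step_val b = 0)"
proof -
  have "{k. k \<le> length (q @ [b]) \<and> height (q @ [b]) k = 0}
      = {k. k \<le> n \<and> height q k = 0} \<union> (if height q n + step_val b = 0 then {Suc n} else {})"
    using assms by (auto simp: le_Suc_eq height_append height_snoc split: if_splits)
  then show ?thesis
    unfolding axis_zeros_def using assms by auto
qed

lemma sum_axis_zeros_snoc:
  assumes "\<And>q. q \<in> A \<Longrightarrow> axis_zeros (q @ [b]) = axis_zeros q + c"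
  shows "(\<Sum>q\<in>(\<lambda>q. q @ [b]) ` A. axis_zeros q) = (\<Sum>q\<in>A. axis_zeros q) + c * card A"
proof -
  have "(\<Sum>q\<in>(\<lambda>q. q @ [b]) ` A. axis_zeros q) = (\<Sum>q\<in>A. axis_zeros (q @ [b]))"
    by (simp add: sum.reindex inj_on_def)
  also have "\<dots> = (\<Sum>q\<in>A. axis_zeros q + c)"
    using assms by simp
  finally show ?thesis
    by (simp add: sum.distrib)
qed

definition zeros_sum :: "nat \<Rightarrow> int \<Rightarrow> nat" where
  "zeros_sum n h = (\<Sum>q\<in>nonneg_paths_to n h. axis_zeros q)"

lemma zeros_sum_Suc:
  assumes "h \<ge> 0"
  shows "zeros_sum (Suc n) h = zeros_sum n (h - 1) + zeros_sum n (h + 1) + of_bool (h = 0) * ballot (Suc n) 0"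
proof -
  let ?c = "of_bool (h = 0) :: nat"
  have "zeros_sum (Suc n) h
      = (\<Sum>q\<in>(\<lambda>q. q @ [True]) ` nonneg_paths_to n (h - 1). axis_zeros q)
        + (\<Sum>q\<in>(\<lambda>q. q @ [False]) ` nonneg_paths_to n (h + 1). axis_zeros q)"
    unfolding zeros_sum_def nonneg_paths_to_Suc[OF assms] by (intro sum.union_disjoint) auto
  also have "(\<Sum>q\<in>(\<lambda>q. q @ [True]) ` nonneg_paths_to n (h - 1). axis_zeros q)
      = zeros_sum n (h - 1) + ?c * ballot n (h - 1)"
    unfolding zeros_sum_def card_nonneg_paths_to [symmetric]
    by (rule sum_axis_zeros_snoc)
      (auto simp: nonneg_paths_to_def nonneg_paths_def axis_zeros_snoc step_val_def)
  also have "(\<Sum>q\<in>(\<lambda>q. q @ [False]) ` nonneg_paths_to n (h + 1). axis_zeros q)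
      = zeros_sum n (h + 1) + ?c * ballot n (h + 1)"
    unfolding zeros_sum_def card_nonneg_paths_to [symmetric]
    by (rule sum_axis_zeros_snoc)
      (auto simp: nonneg_paths_to_def nonneg_paths_def axis_zeros_snoc step_val_def)
  finally show ?thesis
    using assms by (simp add: algebra_simps)
qed

lemma zeros_sum_eq_ballot: "h \<ge> 0 \<Longrightarrow> zeros_sum n h = ballot (Suc n) (h + 1)"
proof (induction n arbitrary: h)
  case 0
  then show ?case
    by (simp add: zeros_sum_def nonneg_paths_to_0 axis_zeros_Nil)
next
  case (Suc n)
  show ?case
  proof (cases "h = 0")
    case True
    have "zeros_sum n (-1) = 0"
      by (simp add: zeros_sum_def nonneg_paths_to_neg)
    then show ?thesis
      using True zeros_sum_Suc[of 0 n] Suc.IH[of 1] by simp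
  next
    case False
    then have "h - 1 \<ge> 0"
      using Suc.prems by simp
    then show ?thesis
      using zeros_sum_Suc[OF Suc.prems, of n] Suc.IH[of "h - 1"] Suc.IH[of "h + 1"] Suc.prems False
      by simp
  qed
qed

definition total_zeros :: "nat \<Rightarrow> nat" where
  "total_zeros n = (\<Sum>q\<in>nonneg_paths n. axis_zeros q)"

lemma card_nonneg_paths_Suc:
  "card (nonneg_paths (Suc n)) + ballot n 0 = 2 * card (nonneg_paths n)"
proof -
  have "card (nonneg_paths (Suc n))
      = card ((\<lambda>q. q @ [True]) ` nonneg_paths n)
        + card ((\<lambda>q. q @ [False]) ` (nonneg_paths n - nonneg_paths_to n 0))"
    unfolding nonneg_paths_Suc by (intro card_Un_disjoint) auto
  also have "\<dots> = card (nonneg_paths n) + (card (nonneg_paths n) - ballot n 0)"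
    by (simp add: card_image inj_on_def card_Diff_subset nonneg_paths_to_subset
        card_nonneg_paths_to [symmetric])
  finally show ?thesis
    using card_mono[OF finite_nonneg_paths nonneg_paths_to_subset[of n 0]]
    by (simp add: card_nonneg_paths_to)
qed

lemma total_zeros_Suc: "total_zeros (Suc n) + zeros_sum n 0 = 2 * total_zeros n + ballot n 1"
proof -
  let ?S = "nonneg_paths n - nonneg_paths_to n 0"
  have "total_zeros (Suc n)
      = (\<Sum>q\<in>(\<lambda>q. q @ [True]) ` nonneg_paths n. axis_zeros q)
        + (\<Sum>q\<in>(\<lambda>q. q @ [False]) ` ?S. axis_zeros q)"
    unfolding total_zeros_def nonneg_paths_Suc by (intro sum.union_disjoint) auto
  also have "(\<Sum>q\<in>(\<lambda>q. q @ [True]) ` nonneg_paths n. axis_zeros q) = total_zeros n + 0 * card (nonneg_paths n)"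
    unfolding total_zeros_def
    by (rule sum_axis_zeros_snoc) (auto simp: nonneg_paths_def nonneg_path_def axis_zeros_snoc step_val_def)
  also have "(\<Sum>q\<in>(\<lambda>q. q @ [False]) ` ?S. axis_zeros q) = (\<Sum>q\<in>?S. axis_zeros (q @ [False]))"
    by (simp add: sum.reindex inj_on_def)
  also have "\<dots> = (\<Sum>q\<in>?S. axis_zeros q + of_bool (height q n = 1))"
    by (intro sum.cong refl) (auto simp: nonneg_paths_def axis_zeros_snoc step_val_def)
  also have "\<dots> = (\<Sum>q\<in>?S. axis_zeros q) + card (?S \<inter> {q. height q n = 1})"
    by (simp add: sum.distrib)
  also have "?S \<inter> {q. height q n = 1} = nonneg_paths_to n 1"
    by (auto simp: nonneg_paths_to_def)
  also have "(\<Sum>q\<in>?S. axis_zeros q) = total_zeros n - zeros_sum n 0"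
    unfolding total_zeros_def zeros_sum_def
    by (rule sum_diff_nat[OF finite_nonneg_paths_to nonneg_paths_to_subset])
  finally have "total_zeros (Suc n) = total_zeros n + (total_zeros n - zeros_sum n 0 + ballot n 1)"
    by (simp add: card_nonneg_paths_to)
  moreover have "zeros_sum n 0 \<le> total_zeros n"
    unfolding total_zeros_def zeros_sum_def
    by (rule sum_mono2[OF finite_nonneg_paths nonneg_paths_to_subset]) simp
  ultimately show ?thesis
    by simp
qed

section \<open>Symmetric Dyck paths as mirrored nonnegative paths\<close>

definition mirror :: "bool list \<Rightarrow> bool list" where
  "mirror q = map Not (rev q)"

lemma length_mirror [simp]: "length (mirror q) = length q"
  by (simp add: mirror_def)

lemma nth_mirror: "j < length q \<Longrightarrow> mirror q ! j = (\<not> q ! (length q - Suc j))"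
  by (simp add: mirror_def rev_nth)

lemma height_append_mirror:
  assumes "length q = n" "n \<le> k" "k \<le> 2 * n"
  shows "height (q @ mirror q) k = height q (2 * n - k)"
proof -
  have "height (q @ mirror q) (n + j) = height q (n - j)" if "j \<le> n" for j
    using that
  proof (induction j)
    case 0
    then show ?case
      using assms(1) by (simp add: height_append)
  next
    case (Suc j)
    have "(q @ mirror q) ! (n + j) = (\<not> q ! (n - Suc j))"
      using Suc.prems assms(1) by (simp add: nth_append nth_mirror)
    moreover have "n - j = Suc (n - Suc j)"
      using Suc.prems by simp
    ultimately show ?case
      using Suc by (simp add: height_Suc step_val_def)
  qed
  from this[of "k - n"] show ?thesis
    using assms(2,3) by (simp add: mult_2)
qed

lemma symmetric_path_append_mirror:
  assumes "length q = n"
  shows "symmetric_path n (q @ mirror q)"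
  unfolding symmetric_path_def
proof (intro allI impI)
  fix i
  assume i: "i < 2 * n"
  show "(q @ mirror q) ! i = (\<not> (q @ mirror q) ! (2 * n - 1 - i))"
  proof (cases "i < n")
    case True
    then show ?thesis
      using assms by (auto simp: nth_append nth_mirror)
  next
    case False
    then have "n - Suc (i - n) = 2 * n - 1 - i"
      using i by simp
    with False i assms show ?thesis
      by (auto simp: nth_append nth_mirror)
  qed
qed

lemma sym_dyck_path_split:
  assumes "p \<in> sym_dyck_paths n"
  shows "p = take n p @ mirror (take n p)" "take n p \<in> nonneg_paths n"
proof -
  from assms have "dyck_path n p" "symmetric_path n p"
    by (simp_all add: sym_dyck_paths_def)
  then have len: "length p = 2 * n" and nonneg: "\<forall>k\<le>2 * n. height p k \<ge> 0"
    and sym: "\<forall>i<2 * n. p ! i \<longleftrightarrow> \<not> p ! (2 * n - 1 - i)"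
    unfolding dyck_path_def symmetric_path_def by blast+
  define q where "q = take n p"
  have len_q: "length q = n"
    using len by (simp add: q_def)
  have "drop n p = mirror q"
  proof (rule nth_equalityI)
    fix j
    assume "j < length (drop n p)"
    then have j: "j < n"
      using len by simp
    moreover have "2 * n - 1 - (n + j) = n - Suc j"
      by simp
    ultimately have "p ! (n + j) = (\<not> p ! (n - Suc j))"
      using sym[rule_format, of "n + j"] by simp
    then show "drop n p ! j = mirror q ! j"
      using j len len_q by (simp add: nth_mirror q_def)
  qed (use len len_q in simp)
  then have p: "p = q @ mirror q"
    unfolding q_def by (metis append_take_drop_id)
  then show "p = take n p @ mirror (take n p)"
    by (simp only: q_def)
  have "height q k \<ge> 0" if "k \<le> length q" for k
    using that nonneg[rule_format, of k] len_q unfolding p by (simp add: height_append)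
  then show "take n p \<in> nonneg_paths n"
    using len_q unfolding nonneg_paths_def nonneg_path_def q_def by simp
qed

lemma append_mirror_in_sym_dyck_paths:
  assumes "q \<in> nonneg_paths n"
  shows "q @ mirror q \<in> sym_dyck_paths n"
proof -
  from assms have len_q: "length q = n" and nonneg: "nonneg_path q"
    by (simp_all add: nonneg_paths_def)
  have "height (q @ mirror q) k \<ge> 0" if "k \<le> 2 * n" for k
  proof (cases "k \<le> n")
    case True
    then show ?thesis
      using nonneg len_q unfolding nonneg_path_def by (simp add: height_append)
  next
    case False
    then show ?thesis
      using nonneg len_q that unfolding nonneg_path_def by (simp add: height_append_mirror)
  qed
  moreover have "height (q @ mirror q) (2 * n) = 0"
    using height_append_mirror[OF len_q, of "2 * n"] by simp
  ultimately show ?thesis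
    using symmetric_path_append_mirror[OF len_q] len_q
    unfolding sym_dyck_paths_def dyck_path_def by simp
qed

lemma sym_dyck_paths_eq_image: "sym_dyck_paths n = (\<lambda>q. q @ mirror q) ` nonneg_paths n"
  using sym_dyck_path_split append_mirror_in_sym_dyck_paths by blast

lemma inj_on_append_mirror: "inj_on (\<lambda>q. q @ mirror q) (nonneg_paths n)"
proof (rule inj_onI)
  fix q r
  assume "q \<in> nonneg_paths n" "r \<in> nonneg_paths n" "q @ mirror q = r @ mirror r"
  then have "take n (q @ mirror q) = take n (r @ mirror r)" "length q = n" "length r = n"
    by (simp_all add: nonneg_paths_def)
  then show "q = r"
    by simp
qed

lemma d_seq_eq_card_nonneg_paths: "d_seq n = card (nonneg_paths n)"
  unfolding d_seq_def sym_dyck_paths_eq_image by (rule card_image[OF inj_on_append_mirror])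

lemma axis_zeros_append_mirror:
  assumes "length q = n"
  shows "{k. k \<le> 2 * n \<and> height (q @ mirror q) k = 0}
    = {k. k \<le> n \<and> height q k = 0} \<union> (\<lambda>k. 2 * n - k) ` {k. k \<le> n \<and> height q k = 0}"
    (is "?L = ?Z \<union> ?M")
proof (rule set_eqI)
  fix k
  show "k \<in> ?L \<longleftrightarrow> k \<in> ?Z \<union> ?M"
  proof (cases "k \<le> n")
    case True
    have "k' = n \<and> 2 * n - k' = n" if "k' \<le> n" "2 * n - k' \<le> n" for k'
      using that by auto
    then show ?thesis
      using True assms by (force simp: height_append)
  next
    case False
    show ?thesis
    proof
      assume "k \<in> ?L"
      then have "2 * n - k \<in> ?Z" "k = 2 * n - (2 * n - k)"
        using False assms by (auto simp: height_append_mirror)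
      then show "k \<in> ?Z \<union> ?M"
        by blast
    next
      assume "k \<in> ?Z \<union> ?M"
      then show "k \<in> ?L"
        using False assms by (auto simp: height_append_mirror)
    qed
  qed
qed

text \<open>The midpoint \<open>n\<close> is the only zero of \<open>q @ mirror q\<close> that is its own mirror image.\<close>

lemma axis_points_append_mirror:
  assumes "length q = n"
  shows "axis_points n (q @ mirror q) + of_bool (height q n = 0) = 2 * axis_zeros q"
proof -
  define Z where "Z = {k. k \<le> n \<and> height q k = 0}"
  define M where "M = (\<lambda>k. 2 * n - k) ` Z"
  have "Z \<inter> M = (if height q n = 0 then {n} else {})"
  proof -
    have "k = n" if "k \<le> n" "2 * n - k \<le> n" for k
      using that by simp
    moreover have "\<exists>x\<le>n. height q x = 0 \<and> n = 2 * n - x" if "height q n = 0"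
      using that by (intro exI[of _ n]) simp
    ultimately show ?thesis
      unfolding Z_def M_def by (auto simp: image_iff)
  qed
  then have "card (Z \<inter> M) = of_bool (height q n = 0)"
    by simp
  moreover have "card M = card Z"
    unfolding M_def by (rule card_image) (auto simp: Z_def inj_on_def)
  moreover have "card (Z \<union> M) + card (Z \<inter> M) = card Z + card M"
    by (intro card_Un_Int [symmetric]) (simp_all add: Z_def M_def)
  moreover have "axis_zeros q = card Z"
    unfolding axis_zeros_def Z_def assms ..
  ultimately show ?thesis
    unfolding axis_points_def axis_zeros_append_mirror[OF assms] Z_def [symmetric] M_def [symmetric]
    by linarith
qed

lemma T_seq_total_zeros: "T_seq n + ballot n 0 = 2 * total_zeros n"
proof -
  have "T_seq n = (\<Sum>q\<in>nonneg_paths n. axis_points n (q @ mirror q))"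
    unfolding T_seq_def sym_dyck_paths_eq_image
    by (rule sum.reindex[OF inj_on_append_mirror, unfolded comp_def])
  moreover have "ballot n 0 = card (nonneg_paths_to n 0)"
    by (simp add: card_nonneg_paths_to)
  moreover have "card (nonneg_paths_to n 0) = (\<Sum>q\<in>nonneg_paths n. of_bool (height q n = 0))"
    unfolding nonneg_paths_to_def by (simp add: sum.If_cases Int_def)
  ultimately have "T_seq n + ballot n 0
      = (\<Sum>q\<in>nonneg_paths n. axis_points n (q @ mirror q) + of_bool (height q n = 0))"
    by (simp add: sum.distrib)
  also have "\<dots> = (\<Sum>q\<in>nonneg_paths n. 2 * axis_zeros q)"
  proof (rule sum.cong [OF refl])
    fix q
    assume "q \<in> nonneg_paths n"
    then show "axis_points n (q @ mirror q) + of_bool (height q n = 0) = 2 * axis_zeros q"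
      by (intro axis_points_append_mirror) (simp add: nonneg_paths_def)
  qed
  finally show ?thesis
    unfolding total_zeros_def sum_distrib_left .
qed

section \<open>Central binomial coefficients and the series \<open>B\<close> and \<open>C\<close>\<close>

definition central_binom :: "nat \<Rightarrow> real" where
  "central_binom n = real ((2 * n) choose n)"

lemma central_binom_fact: "central_binom n = fact (2 * n) / (fact n * fact n)"
  by (simp add: central_binom_def binomial_fact mult_2)

lemma central_binom_pos: "central_binom n > 0"
  by (simp add: central_binom_def)

lemma central_binom_Suc:
  "central_binom (Suc n) = 2 * (2 * real n + 1) / (real n + 1) * central_binom n"
proof -
  have "fact (2 * Suc n) = (2 * real n + 1) * (2 * (real n + 1)) * (fact (2 * n) :: real)"
    by (simp add: algebra_simps)
  moreover have "fact (Suc n) = (real n + 1) * (fact n :: real)"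
    by simp
  moreover have "real n + 1 \<noteq> 0" "(fact n :: real) \<noteq> 0"
    by simp_all
  ultimately show ?thesis
    unfolding central_binom_fact
    by (simp only:) (simp add: divide_simps del: fact_Suc, simp add: algebra_simps)
qed

lemma catalan_eq_central_binom: "catalan n = central_binom n / (real n + 1)"
  by (simp add: catalan_def central_binom_def)

lemma gbinomial_Suc_real: "(a::real) gchoose (Suc k) = (a gchoose k) * (a - real k) / (real k + 1)"
  using gbinomial_mult_1[of a k] by (simp add: field_simps)

lemma gbinomial_minus_half_times_power: "((-1/2::real) gchoose n) * (-4) ^ n = central_binom n"
proof (induction n)
  case 0
  then show ?case by (simp add: central_binom_def)
next
  case (Suc n)
  have "((-1/2::real) gchoose Suc n) * (-4) ^ Suc n
      = ((-1/2::real) gchoose n) * (-4) ^ n * (2 * (2 * real n + 1) / (real n + 1))"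
    by (simp add: gbinomial_Suc_real field_simps)
  then show ?case
    unfolding Suc.IH central_binom_Suc by (simp only: ac_simps)
qed

lemma gbinomial_half_times_power: "((1/2::real) gchoose Suc n) * (-4) ^ Suc n = -2 * catalan n"
proof (induction n)
  case 0
  then show ?case by (simp add: catalan_def)
next
  case (Suc n)
  have "((1/2::real) gchoose Suc (Suc n)) * (-4) ^ Suc (Suc n)
      = ((1/2::real) gchoose Suc n) * (-4) ^ Suc n * ((4 * real n + 2) / (real n + 2))"
    unfolding gbinomial_Suc_real[of _ "Suc n"] power_Suc[of "-4::real" "Suc n"]
    by (simp add: field_simps)
  also have "\<dots> = -2 * catalan (Suc n)"
    unfolding Suc.IH catalan_eq_central_binom central_binom_Suc by (simp add: divide_simps)
  finally show ?case .
qed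

lemma sums_Bgf:
  assumes "\<bar>y\<bar> < 1/4"
  shows "(\<lambda>n. central_binom n * y ^ n) sums Bgf y"
proof -
  have "\<bar>-4 * y\<bar> < 1" using assms by simp
  from gen_binomial_real[OF this, of "-1/2"]
  have "(\<lambda>n. ((-1/2::real) gchoose n) * (-4 * y) ^ n) sums (1 - 4 * y) powr (-1/2)"
    by simp
  moreover have "(1 - 4 * y) powr (-1/2) = Bgf y"
    using assms by (simp add: Bgf_def powr_minus_divide powr_half_sqrt)
  moreover have "((-1/2::real) gchoose n) * (-4 * y) ^ n = central_binom n * y ^ n" for n
    by (simp only: power_mult_distrib mult.assoc [symmetric] gbinomial_minus_half_times_power)
  ultimately show ?thesis by simp
qed

text \<open>The hypothesis \<open>y \<noteq> 0\<close> is needed because \<open>Cgf 0 = 0\<close> (division by zero), while the series sums to 1.\<close>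

lemma sums_Cgf:
  assumes "y \<noteq> 0" "\<bar>y\<bar> < 1/4"
  shows "(\<lambda>n. catalan n * y ^ n) sums Cgf y"
proof -
  have "\<bar>-4 * y\<bar> < 1" using assms by simp
  from sqrt_series[OF this]
  have "(\<lambda>n. ((1/2::real) gchoose Suc n) * (-4 * y) ^ Suc n) sums (sqrt (1 - 4 * y) - 1)"
    by (subst sums_Suc_iff) simp
  moreover have "(\<lambda>n. ((1/2::real) gchoose Suc n) * (-4 * y) ^ Suc n)
      = (\<lambda>n. (-2 * y) * (catalan n * y ^ n))"
  proof
    fix n
    have "((1/2::real) gchoose Suc n) * (-4 * y) ^ Suc n
        = (((1/2::real) gchoose Suc n) * (-4) ^ Suc n) * y ^ Suc n"
      by (simp only: power_mult_distrib mult.assoc)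
    also have "\<dots> = (-2 * y) * (catalan n * y ^ n)"
      by (simp only: gbinomial_half_times_power) (simp add: algebra_simps)
    finally show "((1/2::real) gchoose Suc n) * (-4 * y) ^ Suc n = (-2 * y) * (catalan n * y ^ n)" .
  qed
  ultimately have "(\<lambda>n. (-2 * y) * (catalan n * y ^ n)) sums (sqrt (1 - 4 * y) - 1)"
    by simp
  then have "(\<lambda>n. (-2 * y) * (catalan n * y ^ n) / (-2 * y)) sums ((sqrt (1 - 4 * y) - 1) / (-2 * y))"
    by (rule sums_divide)
  moreover have "(sqrt (1 - 4 * y) - 1) / (-2 * y) = Cgf y"
    unfolding Cgf_def by (simp add: divide_simps)
  ultimately show ?thesis
    using assms(1) by simp
qed

lemma sums_shift:
  fixes a :: "nat \<Rightarrow> real"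
  assumes "(\<lambda>n. a n * y ^ n) sums S" "y \<noteq> 0"
  shows "(\<lambda>n. a (Suc n) * y ^ n) sums ((S - a 0) / y)"
proof -
  have "(\<lambda>n. a (Suc n) * y ^ Suc n) sums (S - a 0)"
    using sums_Suc_iff[of "\<lambda>n. a n * y ^ n" "S - a 0"] assms(1) by simp
  then have "(\<lambda>n. a (Suc n) * y ^ Suc n / y) sums ((S - a 0) / y)"
    by (rule sums_divide)
  with assms(2) show ?thesis by simp
qed

lemma sums_even_odd:
  fixes f :: "nat \<Rightarrow> 'a::real_normed_vector"
  assumes "(\<lambda>m. f (2 * m)) sums A" "(\<lambda>m. f (2 * m + 1)) sums B"
  shows "f sums (A + B)"
proof -
  have "(\<lambda>n. if even n then f n else 0) sums A"
    using assms(1) by (subst sums_mono_reindex[of "\<lambda>n. 2 * n", symmetric])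
      (auto simp: strict_mono_def elim!: evenE)
  moreover have "(\<lambda>n. if odd n then f n else 0) sums B"
    using assms(2) by (subst sums_mono_reindex[of "\<lambda>n. 2 * n + 1", symmetric])
      (auto simp: strict_mono_def elim!: oddE)
  ultimately have "(\<lambda>n. (if even n then f n else 0) + (if odd n then f n else 0)) sums (A + B)"
    by (rule sums_add)
  moreover have "(\<lambda>n. (if even n then f n else 0) + (if odd n then f n else 0)) = f"
    by auto
  ultimately show ?thesis by simp
qed

section \<open>Closed forms for \<open>d\<close> and \<open>T\<close>\<close>

declare ballot.simps(2) [simp del]

lemma binomial_adjacent_ratio:
  "real (Suc (a + b) choose a) = (real a + 1) / (real b + 1) * real (Suc (a + b) choose Suc a)"
proof -
  have "real (Suc a) * real (Suc (a + b) choose Suc a) = real (Suc b) * real (Suc (a + b) choose a)"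
    using Suc_times_binomial_add[of a b] by (simp only: of_nat_mult [symmetric])
  then show ?thesis
    by (simp add: field_simps)
qed

lemma binomial_odd_middle: "real ((2 * m + 1) choose m) = 2 * central_binom m - catalan m"
proof -
  have "real ((2 * m + 1) choose m) = fact (2 * m + 1) / (fact m * fact (Suc m))"
    by (simp add: binomial_fact Suc_diff_le)
  moreover have "fact (2 * m + 1) = (2 * real m + 1) * (fact (2 * m) :: real)"
    by simp
  moreover have "fact (Suc m) = (real m + 1) * (fact m :: real)"
    by simp
  moreover have "real m + 1 \<noteq> 0" "(fact m :: real) \<noteq> 0"
    by simp_all
  ultimately show ?thesis
    unfolding catalan_eq_central_binom central_binom_fact
    by (simp only:) (simp add: divide_simps del: fact_Suc, simp add: algebra_simps)
qed

lemma ballot_even_0: "real (ballot (2 * m) 0) = catalan m"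
proof (cases m)
  case 0
  then show ?thesis by (simp add: catalan_def)
next
  case (Suc k)
  have "int (ballot (2 * m) (int (2 * m) - 2 * int m)) = ballot_binom (2 * m) m"
    by (rule ballot_eq_ballot_binom) simp
  then have "real (ballot (2 * m) 0) = central_binom m - real ((2 * m) choose k)"
    using Suc by (simp add: ballot_binom_def central_binom_def)
  also have "real ((2 * m) choose k) = real m / (real m + 1) * central_binom m"
  proof -
    have "Suc (k + m) = 2 * m" "Suc k = m"
      using Suc by simp_all
    then have "real ((2 * m) choose k) = (real k + 1) / (real m + 1) * central_binom m"
      using binomial_adjacent_ratio[of k m] by (simp only: central_binom_def)
    then show ?thesis
      using Suc by simp
  qed
  finally show ?thesis
    by (simp add: catalan_eq_central_binom field_simps)
qed

lemma card_nonneg_paths_even_odd: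
  "real (card (nonneg_paths (2 * m))) = central_binom m \<and>
   real (card (nonneg_paths (2 * m + 1))) = 2 * central_binom m - catalan m"
proof (induction m)
  case 0
  show ?case
    using card_nonneg_paths_Suc[of 0]
    by (simp add: nonneg_paths_0 central_binom_def catalan_def)
next
  case (Suc m)
  have "real (card (nonneg_paths (2 * Suc m))) = 2 * (2 * central_binom m - catalan m)"
    using card_nonneg_paths_Suc[of "2 * m + 1"] Suc.IH ballot_odd_0[of m]
    by (simp add: of_nat_mult [symmetric] of_nat_add [symmetric])
  also have "\<dots> = central_binom (Suc m)"
    by (simp add: central_binom_Suc catalan_eq_central_binom field_simps)
  finally have even: "real (card (nonneg_paths (2 * Suc m))) = central_binom (Suc m)" .
  moreover have "real (card (nonneg_paths (2 * Suc m + 1))) = 2 * central_binom (Suc m) - catalan (Suc m)"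
    using card_nonneg_paths_Suc[of "2 * Suc m"] even ballot_even_0[of "Suc m"]
    by (simp add: of_nat_mult [symmetric] of_nat_add [symmetric])
  ultimately show ?case ..
qed

lemma total_zeros_eq: "total_zeros n + ballot (Suc n) 0 = card (nonneg_paths (Suc n))"
proof (induction n)
  case 0
  show ?case
    using card_nonneg_paths_Suc[of 0]
    by (simp add: total_zeros_def nonneg_paths_0 axis_zeros_Nil ballot_Suc_0)
next
  case (Suc n)
  have "zeros_sum n 0 = ballot (Suc (Suc n)) 0"
    using zeros_sum_eq_ballot[of 0 n] ballot_Suc_0 by simp
  then show ?case
    using Suc.IH total_zeros_Suc[of n] card_nonneg_paths_Suc[of "Suc n"] ballot_Suc_0[of n]
    by simp
qed

lemma d_seq_even: "real (d_seq (2 * m)) = central_binom m"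
  using card_nonneg_paths_even_odd by (simp add: d_seq_eq_card_nonneg_paths)

lemma d_seq_odd: "real (d_seq (2 * m + 1)) = real ((2 * m + 1) choose m)"
  using card_nonneg_paths_even_odd[of m] binomial_odd_middle[of m]
  by (simp add: d_seq_eq_card_nonneg_paths)

lemma T_seq_even: "real (T_seq (2 * m)) = central_binom (Suc m) - catalan m"
proof -
  have "T_seq (2 * m) + ballot (2 * m) 0 = 2 * card (nonneg_paths (2 * m + 1))"
    using T_seq_total_zeros[of "2 * m"] total_zeros_eq[of "2 * m"] ballot_odd_0[of m] by simp
  then have "real (T_seq (2 * m)) = 2 * (2 * central_binom m - catalan m) - catalan m"
    using card_nonneg_paths_even_odd[of m] ballot_even_0[of m]
    by (simp add: of_nat_mult [symmetric] of_nat_add [symmetric])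
  then show ?thesis
    by (simp add: central_binom_Suc catalan_eq_central_binom field_simps)
qed

lemma central_binom_minus_catalan:
  "central_binom (Suc m) - catalan (Suc m) = real ((2 * m + 2) choose m)"
proof -
  have "Suc (m + Suc m) = 2 * m + 2" "2 * Suc m = 2 * m + 2"
    by simp_all
  then have "real ((2 * m + 2) choose m) = (real m + 1) / (real (Suc m) + 1) * central_binom (Suc m)"
    using binomial_adjacent_ratio[of m "Suc m"] by (simp only: central_binom_def)
  then show ?thesis
    by (simp add: catalan_eq_central_binom field_simps)
qed

lemma T_seq_odd: "real (T_seq (2 * m + 1)) = 2 * (central_binom (Suc m) - catalan (Suc m))"
proof -
  have "T_seq (2 * m + 1) + 2 * ballot (2 * Suc m) 0 = 2 * card (nonneg_paths (2 * Suc m))"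
    using T_seq_total_zeros[of "2 * m + 1"] total_zeros_eq[of "2 * m + 1"] ballot_odd_0[of m] by simp
  then show ?thesis
    using card_nonneg_paths_even_odd[of "Suc m"] ballot_even_0[of "Suc m"]
    by (simp add: of_nat_mult [symmetric] of_nat_add [symmetric])
qed

section \<open>Generating functions and averages\<close>

lemma square_less_quarter:
  fixes x :: real
  assumes "\<bar>x\<bar> < 1/2"
  shows "x\<^sup>2 < 1/4"
proof -
  have "\<bar>x\<bar>\<^sup>2 < (1/2)\<^sup>2"
    using assms by (intro power_strict_mono) auto
  then show ?thesis
    by (simp add: power_divide)
qed

lemma Bgf_Cgf_sqrt:
  assumes "y < 1/4"
  obtains s where "s > 0" "s\<^sup>2 = 1 - 4 * y" "Bgf y = 1 / s" "Cgf y = (1 - s) / (2 * y)"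
proof
  show "sqrt (1 - 4 * y) > 0" "(sqrt (1 - 4 * y))\<^sup>2 = 1 - 4 * y"
    using assms by simp_all
qed (simp_all add: Bgf_def Cgf_def)

lemma Bgf_shift_minus_Cgf:
  assumes "y \<noteq> 0" "y < 1/4"
  shows "(Bgf y - 1) / y - Cgf y = Cgf y * (2 * Bgf y - 1)"
proof -
  obtain s where "s > 0" "s\<^sup>2 = 1 - 4 * y" "Bgf y = 1 / s" "Cgf y = (1 - s) / (2 * y)"
    using Bgf_Cgf_sqrt[OF assms(2)] .
  with assms(1) show ?thesis
    by (simp add: field_simps) algebra
qed

lemma Bgf_minus_Cgf:
  assumes "y \<noteq> 0" "y < 1/4"
  shows "(Bgf y - 1) / y - (Cgf y - 1) / y = Bgf y * (Cgf y)\<^sup>2"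
proof -
  obtain s where "s > 0" "s\<^sup>2 = 1 - 4 * y" "Bgf y = 1 / s" "Cgf y = (1 - s) / (2 * y)"
    using Bgf_Cgf_sqrt[OF assms(2)] .
  with assms(1) show ?thesis
    by (simp add: field_simps) algebra
qed

lemma sqrt_ratio_eq_Bgf:
  assumes "\<bar>x\<bar> < 1/2"
  shows "sqrt ((1 + 2 * x) / (1 - 2 * x)) = (1 + 2 * x) * Bgf (x\<^sup>2)"
proof -
  have pos: "1 + 2 * x > 0" "1 - 2 * x > 0"
    using assms by auto
  have "1 - 4 * x\<^sup>2 = (1 - 2 * x) * (1 + 2 * x)"
    by (simp add: algebra_simps power2_eq_square)
  then have "(1 + 2 * x) / (1 - 2 * x) = (1 + 2 * x)\<^sup>2 / (1 - 4 * x\<^sup>2)"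
    using pos by (simp add: power2_eq_square)
  then show ?thesis
    using pos by (simp add: Bgf_def real_sqrt_divide)
qed

lemma Bgf_Cgf_even_plus_odd:
  assumes "x \<noteq> 0" "\<bar>x\<bar> < 1/2"
  shows "Cgf (x\<^sup>2) * (2 * Bgf (x\<^sup>2) - 1) + 2 * x * Bgf (x\<^sup>2) * (Cgf (x\<^sup>2))\<^sup>2
    = 2 * Cgf (x\<^sup>2) * (1 / (2 * x)) * (sqrt ((1 + 2 * x) / (1 - 2 * x)) - 1) - Cgf (x\<^sup>2)"
proof -
  obtain s where "s > 0" "s\<^sup>2 = 1 - 4 * x\<^sup>2" "Bgf (x\<^sup>2) = 1 / s" "Cgf (x\<^sup>2) = (1 - s) / (2 * x\<^sup>2)"
    using Bgf_Cgf_sqrt[OF square_less_quarter[OF assms(2)]] .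
  moreover note sqrt_ratio_eq_Bgf[OF assms(2)]
  ultimately show ?thesis
    using assms(1) by (simp add: field_simps) algebra
qed

lemma sums_T_seq_even:
  assumes "x \<noteq> 0" "\<bar>x\<bar> < 1/2"
  shows "(\<lambda>m. real (T_seq (2 * m)) * x ^ (2 * m)) sums (Cgf (x\<^sup>2) * (2 * Bgf (x\<^sup>2) - 1))"
proof -
  have y: "x\<^sup>2 \<noteq> 0" "\<bar>x\<^sup>2\<bar> < 1/4"
    using assms square_less_quarter[OF assms(2)] by simp_all
  have "(\<lambda>m. central_binom (Suc m) * (x\<^sup>2) ^ m) sums ((Bgf (x\<^sup>2) - 1) / x\<^sup>2)"
    using sums_shift[OF sums_Bgf[OF y(2)] y(1)] by (simp add: central_binom_def)
  then have "(\<lambda>m. central_binom (Suc m) * (x\<^sup>2) ^ m - catalan m * (x\<^sup>2) ^ m)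
      sums ((Bgf (x\<^sup>2) - 1) / x\<^sup>2 - Cgf (x\<^sup>2))"
    using sums_Cgf[OF y] by (rule sums_diff)
  then show ?thesis
    using Bgf_shift_minus_Cgf[of "x\<^sup>2"] y
    by (simp add: T_seq_even power_mult left_diff_distrib)
qed

lemma sums_T_seq_odd:
  assumes "x \<noteq> 0" "\<bar>x\<bar> < 1/2"
  shows "(\<lambda>m. real (T_seq (2 * m + 1)) * x ^ (2 * m + 1)) sums (2 * x * Bgf (x\<^sup>2) * (Cgf (x\<^sup>2))\<^sup>2)"
proof -
  have y: "x\<^sup>2 \<noteq> 0" "\<bar>x\<^sup>2\<bar> < 1/4"
    using assms square_less_quarter[OF assms(2)] by simp_all
  have "(\<lambda>m. central_binom (Suc m) * (x\<^sup>2) ^ m) sums ((Bgf (x\<^sup>2) - 1) / x\<^sup>2)"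
    using sums_shift[OF sums_Bgf[OF y(2)] y(1)] by (simp add: central_binom_def)
  moreover have "(\<lambda>m. catalan (Suc m) * (x\<^sup>2) ^ m) sums ((Cgf (x\<^sup>2) - 1) / x\<^sup>2)"
    using sums_shift[OF sums_Cgf[OF y] y(1)] by (simp add: catalan_def)
  ultimately have "(\<lambda>m. 2 * x * (central_binom (Suc m) * (x\<^sup>2) ^ m - catalan (Suc m) * (x\<^sup>2) ^ m))
      sums (2 * x * ((Bgf (x\<^sup>2) - 1) / x\<^sup>2 - (Cgf (x\<^sup>2) - 1) / x\<^sup>2))"
    by (intro sums_mult sums_diff)
  moreover have "(\<lambda>m. 2 * x * (central_binom (Suc m) * (x\<^sup>2) ^ m - catalan (Suc m) * (x\<^sup>2) ^ m))
      = (\<lambda>m. real (T_seq (2 * m + 1)) * x ^ (2 * m + 1))"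
    by (simp only: T_seq_odd power_add power_mult) (simp add: algebra_simps)
  ultimately show ?thesis
    using y by (simp add: Bgf_minus_Cgf mult.assoc)
qed

lemma sums_T_seq:
  assumes "x \<noteq> 0" "\<bar>x\<bar> < 1/2"
  shows "(\<lambda>n. real (T_seq n) * x ^ n) sums
    (2 * Cgf (x\<^sup>2) * (1 / (2 * x)) * (sqrt ((1 + 2 * x) / (1 - 2 * x)) - 1) - Cgf (x\<^sup>2))"
  using sums_even_odd[OF sums_T_seq_even[OF assms] sums_T_seq_odd[OF assms]]
  unfolding Bgf_Cgf_even_plus_odd[OF assms] .

lemma T_seq_d_seq_ratio_even:
  "real (T_seq (2 * m)) / real (d_seq (2 * m))
     = (real ((2 * m + 2) choose (m + 1)) - catalan m) / real ((2 * m) choose m)"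
  "real (T_seq (2 * m)) / real (d_seq (2 * m)) = (4 * real m + 1) / (real m + 1)"
proof -
  show "real (T_seq (2 * m)) / real (d_seq (2 * m))
     = (real ((2 * m + 2) choose (m + 1)) - catalan m) / real ((2 * m) choose m)"
    by (simp add: T_seq_even d_seq_even central_binom_def)
  have "central_binom (Suc m) - catalan m
      = (2 * (2 * real m + 1) * central_binom m - central_binom m) / (real m + 1)"
    by (simp add: central_binom_Suc catalan_eq_central_binom diff_divide_distrib)
  also have "\<dots> = (4 * real m + 1) / (real m + 1) * central_binom m"
    by (simp add: algebra_simps)
  finally have "central_binom (Suc m) - catalan m = (4 * real m + 1) / (real m + 1) * central_binom m" .
  then show "real (T_seq (2 * m)) / real (d_seq (2 * m)) = (4 * real m + 1) / (real m + 1)"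
    using central_binom_pos[of m] unfolding T_seq_even d_seq_even by simp
qed

lemma T_seq_d_seq_ratio_odd:
  "real (T_seq (2 * m + 1)) / real (d_seq (2 * m + 1))
     = 2 * real ((2 * m + 2) choose m) / real ((2 * m + 1) choose m)"
  "real (T_seq (2 * m + 1)) / real (d_seq (2 * m + 1)) = 4 * (real m + 1) / (real m + 2)"
proof -
  show "real (T_seq (2 * m + 1)) / real (d_seq (2 * m + 1))
     = 2 * real ((2 * m + 2) choose m) / real ((2 * m + 1) choose m)"
    by (simp only: T_seq_odd d_seq_odd central_binom_minus_catalan)
  have "real m + 1 \<noteq> 0"
    by linarith
  have "central_binom (Suc m) - catalan (Suc m) = (real m + 1) / (real m + 2) * central_binom (Suc m)"
    by (simp add: catalan_eq_central_binom field_simps)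
  also have "\<dots> = 2 * (2 * real m + 1) / (real m + 2) * central_binom m"
    using \<open>real m + 1 \<noteq> 0\<close> by (simp add: central_binom_Suc)
  finally have odd: "central_binom (Suc m) - catalan (Suc m) = 2 * (2 * real m + 1) / (real m + 2) * central_binom m" .
  have "2 * central_binom m - catalan m = (2 * real m + 1) / (real m + 1) * central_binom m"
    by (simp add: catalan_eq_central_binom field_simps)
  moreover have "central_binom m \<noteq> 0"
    using central_binom_pos[of m] by simp
  ultimately have "real (T_seq (2 * m + 1)) / real (d_seq (2 * m + 1))
      = 2 * (2 * (2 * real m + 1) / (real m + 2)) / ((2 * real m + 1) / (real m + 1))"
    unfolding T_seq_odd d_seq_odd binomial_odd_middle odd by simp
  also have "\<dots> = 4 * (real m + 1) / (real m + 2)"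
  proof -
    have "2 * real m + 1 > 0" "real m + 2 > 0" "real m + 1 > 0"
      by linarith+
    then show ?thesis
      by (simp add: divide_simps) (simp add: algebra_simps)
  qed
  finally show "real (T_seq (2 * m + 1)) / real (d_seq (2 * m + 1)) = 4 * (real m + 1) / (real m + 2)" .
qed

lemma T_seq_initial_values: "map T_seq [0..<8] = [1, 2, 5, 8, 18, 30, 65, 112]"
proof -
  have "(2 choose 1) = (2 :: nat)" "(4 choose 2) = (6 :: nat)" "(6 choose 3) = (20 :: nat)"
    "(8 choose 4) = (70 :: nat)" "(4 choose 1) = (4 :: nat)" "(6 choose 2) = (15 :: nat)"
    "(8 choose 3) = (56 :: nat)"
    by code_simp+
  then have "T_seq 0 = 1 \<and> T_seq 1 = 2 \<and> T_seq 2 = 5 \<and> T_seq 3 = 8 \<and>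
      T_seq 4 = 18 \<and> T_seq 5 = 30 \<and> T_seq 6 = 65 \<and> T_seq 7 = 112"
    using T_seq_even[of 0] T_seq_even[of 1] T_seq_even[of 2] T_seq_even[of 3]
      T_seq_odd[of 0] T_seq_odd[of 1] T_seq_odd[of 2] T_seq_odd[of 3]
      central_binom_minus_catalan[of 0] central_binom_minus_catalan[of 1]
      central_binom_minus_catalan[of 2] central_binom_minus_catalan[of 3]
    by (simp add: central_binom_def catalan_def)
  moreover have "[0..<8] = [0, 1, 2, 3, 4, 5, 6, 7 :: nat]"
    by (simp add: upt_rec)
  ultimately show ?thesis
    by simp
qed

theorem theorem4p5:
  shows "(\<forall>x::real. 0 < \<bar>x\<bar> \<and> \<bar>x\<bar> < 1/2 \<longrightarrow>
            (\<lambda>n. real (T_seq n) * x ^ n) sums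
              (2 * Cgf (x\<^sup>2) * (1 / (2 * x)) * (sqrt ((1 + 2 * x) / (1 - 2 * x)) - 1) - Cgf (x\<^sup>2)))
    \<and> map T_seq [0..<8] = [1, 2, 5, 8, 18, 30, 65, 112]
    \<and> (\<forall>x::real. 0 < \<bar>x\<bar> \<and> \<bar>x\<bar> < 1/2 \<longrightarrow>
            (\<lambda>m. real (T_seq (2 * m)) * x ^ (2 * m)) sums (Cgf (x\<^sup>2) * (2 * Bgf (x\<^sup>2) - 1)))
    \<and> (\<forall>m. real (T_seq (2 * m)) / real (d_seq (2 * m))
            = (real ((2 * m + 2) choose (m + 1)) - catalan m) / real ((2 * m) choose m)
         \<and> real (T_seq (2 * m)) / real (d_seq (2 * m)) = (4 * real m + 1) / (real m + 1))
    \<and> (\<lambda>m. real (T_seq (2 * m)) / real (d_seq (2 * m))) \<longlonglongrightarrow> 4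
    \<and> (\<forall>x::real. 0 < \<bar>x\<bar> \<and> \<bar>x\<bar> < 1/2 \<longrightarrow>
            (\<lambda>m. real (T_seq (2 * m + 1)) * x ^ (2 * m + 1)) sums (2 * x * Bgf (x\<^sup>2) * (Cgf (x\<^sup>2))\<^sup>2))
    \<and> (\<forall>m. real (T_seq (2 * m + 1)) / real (d_seq (2 * m + 1))
            = 2 * real ((2 * m + 2) choose m) / real ((2 * m + 1) choose m)
         \<and> real (T_seq (2 * m + 1)) / real (d_seq (2 * m + 1)) = 4 * (real m + 1) / (real m + 2))
    \<and> (\<lambda>m. real (T_seq (2 * m + 1)) / real (d_seq (2 * m + 1))) \<longlonglongrightarrow> 4"
proof (intro conjI allI impI)
  fix x :: real
  assume "0 < \<bar>x\<bar> \<and> \<bar>x\<bar> < 1/2"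
  then have x: "x \<noteq> 0" "\<bar>x\<bar> < 1/2"
    by auto
  show "(\<lambda>n. real (T_seq n) * x ^ n) sums
      (2 * Cgf (x\<^sup>2) * (1 / (2 * x)) * (sqrt ((1 + 2 * x) / (1 - 2 * x)) - 1) - Cgf (x\<^sup>2))"
    by (rule sums_T_seq[OF x])
  show "(\<lambda>m. real (T_seq (2 * m)) * x ^ (2 * m)) sums (Cgf (x\<^sup>2) * (2 * Bgf (x\<^sup>2) - 1))"
    by (rule sums_T_seq_even[OF x])
  show "(\<lambda>m. real (T_seq (2 * m + 1)) * x ^ (2 * m + 1)) sums (2 * x * Bgf (x\<^sup>2) * (Cgf (x\<^sup>2))\<^sup>2)"
    by (rule sums_T_seq_odd[OF x])
next
  have "(\<lambda>m. (4 * real m + 1) / (real m + 1)) \<longlonglongrightarrow> 4"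
    by real_asymp
  then show "(\<lambda>m. real (T_seq (2 * m)) / real (d_seq (2 * m))) \<longlonglongrightarrow> 4"
    by (simp only: T_seq_d_seq_ratio_even(2))
next
  have "(\<lambda>m. 4 * (real m + 1) / (real m + 2)) \<longlonglongrightarrow> 4"
    by real_asymp
  then show "(\<lambda>m. real (T_seq (2 * m + 1)) / real (d_seq (2 * m + 1))) \<longlonglongrightarrow> 4"
    by (simp only: T_seq_d_seq_ratio_odd(2))
qed (fact T_seq_initial_values T_seq_d_seq_ratio_even T_seq_d_seq_ratio_odd)+

end
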